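(* Let $P$ be an affine property of finite sets of integers. For each positive integer $n$, let $S(n;P) \subseteq \{1,2,\dots,n\}$ be a subset of largest possible cardinality among the subsets of $\{1,\dots,n\}$ having property $P$, let $f(n;P) = |S(n;P)|$, let $C_P(n) = f(n;P)/n$, and let $A(n;P)$ be the number of three-term arithmetic progressions formed from elements of $S(n;P)$ where order counts and equal terms are allowed, i.e. the number of ordered triples $(a,b,c) \in S(n;P)^3$ with $a + c = 2b$. Then $$A(n;P) = \frac{C_P(n)^3}{2} n^2 + o(n^2) \quad \text{as } n \to \infty.$$
   Context: A property $P$ of finite sets of integers is called affine if (C1) for each fixed pair of integers $\alpha \neq 0$ and $\beta$, a set $\{a_n\}$ has $P$ if and only if $\{\alpha a_n + \beta\}$ has $P$; and (C2) if a set has $P$, then all of its subsets have $P$. *)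

theory Defs
  imports Complex_Main "HOL-Library.Landau_Symbols"
begin

definition affine_prop :: "(int set \<Rightarrow> bool) \<Rightarrow> bool" where
  "affine_prop P \<longleftrightarrow>
     (\<forall>A alpha beta. finite A \<and> alpha \<noteq> 0 \<longrightarrow> (P A \<longleftrightarrow> P ((\<lambda>a. alpha * a + beta) ` A))) \<and>
     (\<forall>A B. finite A \<and> P A \<and> B \<subseteq> A \<longrightarrow> P B)"

definition num_3AP :: "int set \<Rightarrow> nat" where
  "num_3AP S = card {(a, b, c). a \<in> S \<and> b \<in> S \<and> c \<in> S \<and> a + c = 2 * b}"

end

theory Submission
  imports Defs "HOL-Analysis.Kronecker_Approximation_Theorem"
begin

text \<open>Let \<open>c\<close> be the infimum of the densities \<open>f(m;P)/m\<close> and fix \<open>L\<close> with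
  \<open>f(L;P) \<le> (c + \<epsilon>) L\<close>. Since \<open>P\<close> is affine, the part of \<open>S(n;P)\<close> lying on an arithmetic
  progression of length \<open>L\<close> is an affine image of a subset of \<open>{1..L}\<close> with property \<open>P\<close>, so it has
  at most \<open>(c + \<epsilon>) L\<close> elements, while \<open>S(n;P)\<close> itself has density \<open>\<delta> \<ge> c\<close>. Hence the balanced
  function \<open>1\<^sub>S - \<delta>\<close> has mean zero and sums at most \<open>\<epsilon> L\<close> along every such progression. Via
  Dirichlet approximation this one-sided bound forces all its Fourier coefficients to be \<open>O(\<epsilon> n)\<close>,
  and the usual Fourier expression for the number of three-term progressions then shows that
  \<open>S(n;P)\<close> has as many of them as a random set of density \<open>\<delta>\<close>, i.e. \<open>\<delta>\<^sup>3 n\<^sup>2 / 2 + O(\<epsilon> n\<^sup>2)\<close>.\<close>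

definition e2pi :: "real \<Rightarrow> complex" where
  "e2pi x = cis (2 * pi * x)"

lemma e2pi_mult: "e2pi x * e2pi y = e2pi (x + y)"
  by (simp add: e2pi_def cis_mult distrib_left)

lemma norm_e2pi [simp]: "norm (e2pi x) = 1"
  by (simp add: e2pi_def)

lemma e2pi_of_int [simp]: "e2pi (of_int m) = 1"
  by (simp add: e2pi_def)

lemma cnj_e2pi: "cnj (e2pi x) = e2pi (- x)"
  by (simp add: e2pi_def cis_cnj)

lemma e2pi_power: "e2pi x ^ n = e2pi (real n * x)"
  unfolding e2pi_def by (simp add: Complex.DeMoivre mult_ac)

lemma e2pi_eq_1_iff: "e2pi x = 1 \<longleftrightarrow> x \<in> \<int>"
proof
  assume "e2pi x = 1"
  then have "cos (2 * pi * x) = 1"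
    by (simp add: e2pi_def complex_eq_iff)
  then obtain m :: int where "2 * pi * x = real_of_int m * 2 * pi"
    using cos_one_2pi_int by metis
  then show "x \<in> \<int>"
    by simp
qed (auto elim: Ints_cases)

lemma norm_e2pi_minus_1_le: "norm (e2pi x - 1) \<le> 2 * pi * \<bar>x\<bar>"
proof -
  have "norm (e2pi x - 1) = 2 * \<bar>sin (2 * pi * x / 2)\<bar>"
    using dist_exp_i_1[of "2 * pi * x"] by (simp add: e2pi_def cis_conv_exp mult_ac)
  also have "\<dots> \<le> 2 * \<bar>2 * pi * x / 2\<bar>"
    using abs_sin_x_le_abs_x by simp
  finally show ?thesis
    by (simp add: abs_mult)
qed

lemma sum_e2pi_roots_of_unity:
  fixes k :: int
  assumes "N > 0"
  shows "(\<Sum>r<N. e2pi (real r * of_int k / real N)) = (if int N dvd k then of_nat N else 0)"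
proof (cases "int N dvd k")
  case True
  then obtain m where "k = int N * m" ..
  then have "e2pi (real r * of_int k / real N) = 1" for r
    using assms e2pi_of_int[of "int r * m"] by simp
  then show ?thesis
    using True by simp
next
  case False
  define w where "w = e2pi (of_int k / real N)"
  have "w \<noteq> 1"
  proof
    assume "w = 1"
    then obtain m :: int where "of_int k / real N = of_int m"
      by (auto simp: w_def e2pi_eq_1_iff elim: Ints_cases)
    then have "of_int k = real N * of_int m"
      using assms by (simp add: field_simps)
    then have "k = int N * m"
      by (metis of_int_eq_iff of_int_mult of_int_of_nat_eq)
    then show False
      using False by simp
  qed
  moreover have "w ^ N = 1"
    using assms by (simp add: w_def e2pi_power)
  ultimately have "(\<Sum>r<N. w ^ r) = 0"
    by (simp add: geometric_sum)
  then show ?thesis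
    using False by (simp add: w_def e2pi_power)
qed

lemma sum_e2pi_roots_of_unity_small:
  fixes k :: int
  assumes "\<bar>k\<bar> < int N"
  shows "(\<Sum>r<N. e2pi (real r * of_int k / real N)) = (if k = 0 then of_nat N else 0)"
proof -
  have "int N dvd k \<longleftrightarrow> k = 0"
    using assms dvd_imp_le_int[of k "int N"] by auto
  then show ?thesis
    using assms sum_e2pi_roots_of_unity[of N k] by simp
qed

definition fourier_sum :: "nat \<Rightarrow> (int \<Rightarrow> real) \<Rightarrow> real \<Rightarrow> complex" where
  "fourier_sum n f \<theta> = (\<Sum>x\<in>{1..int n}. of_real (f x) * e2pi (\<theta> * of_int x))"

definition ap3_form :: "nat \<Rightarrow> (int \<Rightarrow> real) \<Rightarrow> (int \<Rightarrow> real) \<Rightarrow> (int \<Rightarrow> real) \<Rightarrow> real" where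
  "ap3_form n f1 f2 f3 = (\<Sum>a\<in>{1..int n}. \<Sum>b\<in>{1..int n}. \<Sum>c\<in>{1..int n}.
      f1 a * f2 b * f3 c * (if a + c = 2 * b then 1 else 0))"

lemma sum_product3:
  fixes f g h :: "'a \<Rightarrow> 'b::comm_semiring_1"
  shows "sum f A * sum g B * sum h C = (\<Sum>a\<in>A. \<Sum>b\<in>B. \<Sum>c\<in>C. f a * g b * h c)"
proof -
  have "sum f A * sum g B * sum h C = (\<Sum>a\<in>A. \<Sum>b\<in>B. f a * g b) * sum h C"
    by (simp only: sum_product)
  also have "\<dots> = (\<Sum>a\<in>A. \<Sum>b\<in>B. f a * g b * sum h C)"
    by (simp only: sum_distrib_right)
  also have "\<dots> = (\<Sum>a\<in>A. \<Sum>b\<in>B. \<Sum>c\<in>C. f a * g b * h c)"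
    by (simp only: sum_distrib_left)
  finally show ?thesis .
qed

text \<open>Modulo \<open>N = 2n + 1\<close> the progression condition \<open>a + c = 2b\<close> on \<open>{1..n}\<close> has no wrap-around.\<close>
lemma ap3_form_fourier:
  fixes n :: nat
  defines "N \<equiv> 2 * n + 1"
  shows "of_real (ap3_form n f1 f2 f3) =
    (\<Sum>r<N. fourier_sum n f1 (real r / real N) * fourier_sum n f2 (-2 * real r / real N)
      * fourier_sum n f3 (real r / real N)) / of_nat N"
proof -
  let ?I = "{1..int n}"
  let ?e = "\<lambda>r a b c. e2pi (real r * of_int (a + c - 2 * b) / real N)"
  have "(\<Sum>r<N. fourier_sum n f1 (real r / real N) * fourier_sum n f2 (-2 * real r / real N)
      * fourier_sum n f3 (real r / real N))
     = (\<Sum>r<N. \<Sum>a\<in>?I. \<Sum>b\<in>?I. \<Sum>c\<in>?I. of_real (f1 a * f2 b * f3 c) * ?e r a b c)"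
  proof (rule sum.cong[OF refl])
    fix r
    have "e2pi (real r / real N * of_int a) * e2pi (-2 * real r / real N * of_int b)
        * e2pi (real r / real N * of_int c) = ?e r a b c" for a b c
      unfolding e2pi_mult
      by (rule arg_cong[where f = e2pi]) (simp add: add_divide_distrib diff_divide_distrib algebra_simps)
    then have "of_real (f1 a) * e2pi (real r / real N * of_int a)
        * (of_real (f2 b) * e2pi (-2 * real r / real N * of_int b))
        * (of_real (f3 c) * e2pi (real r / real N * of_int c))
      = of_real (f1 a * f2 b * f3 c) * ?e r a b c" for a b c
      by (metis (no_types, lifting) mult.assoc mult.left_commute of_real_mult)
    then show "fourier_sum n f1 (real r / real N) * fourier_sum n f2 (-2 * real r / real N)
        * fourier_sum n f3 (real r / real N)
      = (\<Sum>a\<in>?I. \<Sum>b\<in>?I. \<Sum>c\<in>?I. of_real (f1 a * f2 b * f3 c) * ?e r a b c)"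
      unfolding fourier_sum_def sum_product3 by presburger
  qed
  also have "\<dots> = (\<Sum>a\<in>?I. \<Sum>b\<in>?I. \<Sum>c\<in>?I. of_real (f1 a * f2 b * f3 c) * (\<Sum>r<N. ?e r a b c))"
    by (simp add: sum_distrib_left sum.swap[of _ "{..<N}"])
  also have "\<dots> = (\<Sum>a\<in>?I. \<Sum>b\<in>?I. \<Sum>c\<in>?I.
      of_real (f1 a * f2 b * f3 c) * (if a + c = 2 * b then of_nat N else 0))"
    by (intro sum.cong refl, subst sum_e2pi_roots_of_unity_small) (auto simp: N_def)
  also have "\<dots> = of_nat N * of_real (ap3_form n f1 f2 f3)"
    unfolding ap3_form_def by (simp add: sum_distrib_left mult_ac) (intro sum.cong refl, simp)
  finally show ?thesis
    by (simp add: N_def del: of_nat_Suc)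
qed

text \<open>For \<open>0 < |t| \<le> 2\<close> the dilation \<open>x \<mapsto> t x\<close> is injective on \<open>{1..n}\<close> modulo \<open>2n + 1\<close>.\<close>
lemma parseval_dilated:
  fixes n :: nat and t :: int
  defines "N \<equiv> 2 * n + 1"
  assumes "t \<noteq> 0" "\<bar>t\<bar> \<le> 2"
  shows "(\<Sum>r<N. (norm (fourier_sum n f (of_int t * real r / real N)))\<^sup>2)
    = real N * (\<Sum>x\<in>{1..int n}. (f x)\<^sup>2)"
proof -
  let ?I = "{1..int n}"
  let ?e = "\<lambda>r x y. e2pi (real r * of_int (t * (x - y)) / real N)"
  have "of_real ((norm (fourier_sum n f (of_int t * real r / real N)))\<^sup>2)
      = (\<Sum>x\<in>?I. \<Sum>y\<in>?I. of_real (f x * f y) * ?e r x y)" for r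
  proof -
    have "e2pi (of_int t * real r / real N * of_int x) * e2pi (- (of_int t * real r / real N * of_int y))
        = ?e r x y" for x y
      unfolding e2pi_mult by (rule arg_cong[where f = e2pi]) (simp add: diff_divide_distrib algebra_simps)
    then show ?thesis
      unfolding complex_norm_square fourier_sum_def
      by (simp add: cnj_e2pi sum_product) (intro sum.cong refl, metis mult.assoc mult.left_commute)
  qed
  then have "of_real (\<Sum>r<N. (norm (fourier_sum n f (of_int t * real r / real N)))\<^sup>2)
      = (\<Sum>x\<in>?I. \<Sum>y\<in>?I. of_real (f x * f y) * (\<Sum>r<N. ?e r x y))"
    by (simp add: sum_distrib_left sum.swap[of _ "{..<N}"])
  also have "\<dots> = (\<Sum>x\<in>?I. \<Sum>y\<in>?I. of_real (f x * f y) * (if y = x then of_nat N else 0))"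
  proof (intro sum.cong refl)
    fix x y assume "x \<in> ?I" "y \<in> ?I"
    then have "\<bar>t\<bar> * \<bar>x - y\<bar> \<le> 2 * (int n - 1)"
      using assms(3) by (intro mult_mono) auto
    then have "\<bar>t * (x - y)\<bar> < int N"
      by (simp add: N_def abs_mult)
    then show "of_real (f x * f y) * (\<Sum>r<N. ?e r x y) =
        of_real (f x * f y) * (if y = x then of_nat N else 0)"
      by (subst sum_e2pi_roots_of_unity_small) (use assms(2) in auto)
  qed
  also have "\<dots> = of_real (real N * (\<Sum>x\<in>?I. (f x)\<^sup>2))"
    by (simp add: if_distrib sum_distrib_left power2_eq_square mult_ac cong: if_cong)
  finally show ?thesis
    by (simp only: of_real_eq_iff)
qed

lemma parseval_dilated_le:
  fixes n :: nat and t :: int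
  defines "N \<equiv> 2 * n + 1"
  assumes "t \<noteq> 0" "\<bar>t\<bar> \<le> 2" and f: "\<And>x. x \<in> {1..int n} \<Longrightarrow> \<bar>f x\<bar> \<le> 1"
  shows "(\<Sum>r<N. (norm (fourier_sum n f (of_int t * real r / real N)))\<^sup>2) \<le> real N * real n"
proof -
  have "(\<Sum>x\<in>{1..int n}. (f x)\<^sup>2) \<le> (\<Sum>x\<in>{1..int n}. 1)"
    using f by (intro sum_mono) (simp add: abs_le_square_iff[of _ 1, simplified])
  then show ?thesis
    unfolding N_def parseval_dilated[OF assms(2,3)] by simp
qed

lemma sum_triple_product_le:
  fixes a b c :: "'i \<Rightarrow> real"
  assumes "M \<ge> 0" "\<And>r. r \<in> R \<Longrightarrow> 0 \<le> a r \<and> a r \<le> M"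
    "(\<Sum>r\<in>R. (b r)\<^sup>2) \<le> K" "(\<Sum>r\<in>R. (c r)\<^sup>2) \<le> K"
  shows "(\<Sum>r\<in>R. a r * \<bar>b r\<bar> * \<bar>c r\<bar>) \<le> M * K"
proof -
  have "(\<Sum>r\<in>R. a r * \<bar>b r\<bar> * \<bar>c r\<bar>) \<le> (\<Sum>r\<in>R. M * (((b r)\<^sup>2 + (c r)\<^sup>2) / 2))"
  proof (rule sum_mono)
    fix r assume "r \<in> R"
    moreover have "\<bar>b r * c r\<bar> \<le> ((b r)\<^sup>2 + (c r)\<^sup>2) / 2"
      using sum_squares_bound[of "\<bar>b r\<bar>" "\<bar>c r\<bar>"] by (simp add: abs_mult field_simps power2_eq_square)
    ultimately show "a r * \<bar>b r\<bar> * \<bar>c r\<bar> \<le> M * (((b r)\<^sup>2 + (c r)\<^sup>2) / 2)"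
      using assms(1,2) by (simp only: mult.assoc abs_mult[symmetric]) (intro mult_mono, auto)
  qed
  also have "\<dots> = M * ((\<Sum>r\<in>R. (b r)\<^sup>2) + (\<Sum>r\<in>R. (c r)\<^sup>2)) / 2"
    by (simp add: sum_distrib_left sum.distrib sum_divide_distrib[symmetric] field_simps)
  also have "\<dots> \<le> M * (K + K) / 2"
    using assms by (intro divide_right_mono mult_left_mono add_mono) auto
  finally show ?thesis
    by simp
qed

lemma ap3_form_le:
  assumes b1: "\<And>x. x \<in> {1..int n} \<Longrightarrow> \<bar>f1 x\<bar> \<le> 1"
    and b2: "\<And>x. x \<in> {1..int n} \<Longrightarrow> \<bar>f2 x\<bar> \<le> 1"
    and b3: "\<And>x. x \<in> {1..int n} \<Longrightarrow> \<bar>f3 x\<bar> \<le> 1"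
    and M: "M \<ge> 0"
    and small: "(\<forall>\<theta>. norm (fourier_sum n f1 \<theta>) \<le> M) \<or> (\<forall>\<theta>. norm (fourier_sum n f2 \<theta>) \<le> M)
      \<or> (\<forall>\<theta>. norm (fourier_sum n f3 \<theta>) \<le> M)"
  shows "\<bar>ap3_form n f1 f2 f3\<bar> \<le> M * real n"
proof -
  define N where "N = 2 * n + 1"
  define A where "A r = norm (fourier_sum n f1 (real r / real N))" for r
  define B where "B r = norm (fourier_sum n f2 (-2 * real r / real N))" for r
  define C where "C r = norm (fourier_sum n f3 (real r / real N))" for r
  have N: "real N > 0"
    by (simp add: N_def)
  have A: "(\<Sum>r<N. (A r)\<^sup>2) \<le> real N * real n"
    using parseval_dilated_le[of 1 n f1] b1 by (simp add: A_def N_def)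
  have B: "(\<Sum>r<N. (B r)\<^sup>2) \<le> real N * real n"
    using parseval_dilated_le[of "-2" n f2] b2 by (simp add: B_def N_def)
  have C: "(\<Sum>r<N. (C r)\<^sup>2) \<le> real N * real n"
    using parseval_dilated_le[of 1 n f3] b3 by (simp add: C_def N_def)
  have "\<bar>ap3_form n f1 f2 f3\<bar> = norm (of_real (ap3_form n f1 f2 f3) :: complex)"
    by simp
  also have "\<dots> \<le> (\<Sum>r<N. A r * B r * C r) / real N"
    unfolding ap3_form_fourier A_def B_def C_def N_def norm_divide norm_of_nat
    by (intro divide_right_mono order.trans[OF norm_sum]) (auto simp: norm_mult)
  also have "(\<Sum>r<N. A r * B r * C r) \<le> M * (real N * real n)"
    using small
  proof (elim disjE)
    assume "\<forall>\<theta>. norm (fourier_sum n f1 \<theta>) \<le> M"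
    then show ?thesis
      using sum_triple_product_le[OF M _ B C, of A] by (simp add: A_def B_def C_def mult.assoc)
  next
    assume "\<forall>\<theta>. norm (fourier_sum n f2 \<theta>) \<le> M"
    then show ?thesis
      using sum_triple_product_le[OF M _ A C, of B] by (simp add: A_def B_def C_def mult_ac)
  next
    assume "\<forall>\<theta>. norm (fourier_sum n f3 \<theta>) \<le> M"
    then show ?thesis
      using sum_triple_product_le[OF M _ A B, of C] by (simp add: A_def B_def C_def mult_ac)
  qed
  then have "(\<Sum>r<N. A r * B r * C r) / real N \<le> M * (real N * real n) / real N"
    using N by (intro divide_right_mono) auto
  finally show ?thesis
    using N by simp
qed

lemma sum_shift_supported:
  fixes k :: "int \<Rightarrow> 'a::comm_monoid_add"
  assumes "\<And>x. x \<notin> {1..int n} \<Longrightarrow> k x = 0" "0 \<le> s" "s \<le> w"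
  shows "(\<Sum>x\<in>{1 - w..int n}. k (x + s)) = (\<Sum>x\<in>{1..int n}. k x)"
proof -
  have "(\<Sum>x\<in>{1 - w..int n}. k (x + s)) = (\<Sum>x\<in>(\<lambda>x. x + s) ` {1 - w..int n}. k x)"
    by (subst sum.reindex) (auto simp: inj_on_def)
  also have "(\<lambda>x. x + s) ` {1 - w..int n} = {1 - w + s..int n + s}"
    by (simp add: image_add_atLeastAtMost' add.commute)
  also have "(\<Sum>x\<in>{1 - w + s..int n + s}. k x) = (\<Sum>x\<in>{1..int n}. k x)"
    by (rule sum.mono_neutral_right) (use assms in auto)
  finally show ?thesis .
qed

text \<open>Every point of \<open>{1..n}\<close> lies at each of the \<open>L\<close> positions of exactly one progression
  \<open>x\<^sub>0, x\<^sub>0 + q, \<dots>\<close> with \<open>x\<^sub>0\<close> in the range summed over.\<close>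
lemma sum_progression_translates:
  fixes k :: "int \<Rightarrow> 'a::comm_semiring_1"
  assumes "\<And>x. x \<notin> {1..int n} \<Longrightarrow> k x = 0" "q \<ge> 1"
  shows "(\<Sum>x0\<in>{1 - q * (int L - 1)..int n}. \<Sum>j<L. k (x0 + q * int j))
    = of_nat L * (\<Sum>x\<in>{1..int n}. k x)"
proof -
  have "(\<Sum>x0\<in>{1 - q * (int L - 1)..int n}. k (x0 + q * int j)) = (\<Sum>x\<in>{1..int n}. k x)"
    if "j < L" for j
    using assms that by (intro sum_shift_supported) (auto intro: mult_left_mono)
  then show ?thesis
    by (subst sum.swap) simp
qed

lemma sum_abs_le_of_sum_eq_0:
  fixes G :: "'a \<Rightarrow> real"
  assumes "finite R" "F \<subseteq> R" "sum G R = 0" "b \<ge> 0"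
    and "\<And>x. x \<in> F \<Longrightarrow> G x \<le> b" "\<And>x. x \<in> R - F \<Longrightarrow> \<bar>G x\<bar> \<le> B"
  shows "(\<Sum>x\<in>F. \<bar>G x\<bar>) \<le> 2 * real (card F) * b + real (card (R - F)) * B"
proof -
  have "sum G R = sum G (R - F) + sum G F"
    using sum.subset_diff[OF assms(2,1)] .
  then have "\<bar>sum G F\<bar> = \<bar>sum G (R - F)\<bar>"
    using assms(3) by linarith
  also have "\<dots> \<le> (\<Sum>x\<in>R - F. \<bar>G x\<bar>)"
    by (rule sum_abs)
  also have "\<dots> \<le> real (card (R - F)) * B"
    using sum_mono[of "R - F" "\<lambda>x. \<bar>G x\<bar>" "\<lambda>_. B"] assms(6) by simp
  finally have "\<bar>sum G F\<bar> \<le> real (card (R - F)) * B" .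
  moreover have "(\<Sum>x\<in>F. max (G x) 0) \<le> real (card F) * b"
    using sum_mono[of F "\<lambda>x. max (G x) 0" "\<lambda>_. b"] assms(4,5) by simp
  moreover have "(\<Sum>x\<in>F. \<bar>G x\<bar>) = 2 * (\<Sum>x\<in>F. max (G x) 0) - sum G F"
    by (simp add: sum_distrib_left sum_subtractf[symmetric]) (intro sum.cong refl, auto)
  ultimately show ?thesis
    by linarith
qed

lemma norm_twisted_progression_sum_approx:
  fixes g :: "int \<Rightarrow> real"
  assumes g: "\<And>x. \<bar>g x\<bar> \<le> 1" and qh: "\<bar>of_int q * \<theta> - of_int h\<bar> \<le> \<eta>"
  shows "norm ((\<Sum>j<L. of_real (g (x0 + q * int j)) * e2pi (\<theta> * of_int (x0 + q * int j)))
      - e2pi (\<theta> * of_int x0) * of_real (\<Sum>j<L. g (x0 + q * int j))) \<le> 2 * pi * \<eta> * real L ^ 2"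
proof -
  define \<phi> where "\<phi> = of_int q * \<theta> - of_int h"
  have e: "e2pi (\<theta> * of_int (x0 + q * int j)) = e2pi (\<theta> * of_int x0) * e2pi (\<phi> * real j)" for j
  proof -
    have "e2pi (\<theta> * of_int x0) * e2pi (\<phi> * real j)
        = e2pi (\<theta> * of_int x0) * e2pi (\<phi> * real j) * e2pi (of_int (h * int j))"
      by (simp only: e2pi_of_int mult_1_right)
    also have "\<dots> = e2pi (\<theta> * of_int (x0 + q * int j))"
      unfolding e2pi_mult by (simp add: \<phi>_def algebra_simps)
    finally show ?thesis ..
  qed
  have "norm (of_real (g (x0 + q * int j)) * e2pi (\<theta> * of_int x0) * (e2pi (\<phi> * real j) - 1))
      \<le> 2 * pi * \<eta> * real L" if "j < L" for j
  proof -
    have "norm (e2pi (\<phi> * real j) - 1) \<le> 2 * pi * (\<bar>\<phi>\<bar> * real j)"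
      using norm_e2pi_minus_1_le[of "\<phi> * real j"] by (simp add: abs_mult)
    also have "\<dots> \<le> 2 * pi * (\<eta> * real L)"
      using qh that by (intro mult_left_mono mult_mono) (auto simp: \<phi>_def)
    finally show ?thesis
      using g[of "x0 + q * int j"]
      by (simp add: norm_mult mult_le_one order_trans[OF mult_left_le_one_le])
  qed
  then have "norm (\<Sum>j<L. of_real (g (x0 + q * int j)) * e2pi (\<theta> * of_int x0) * (e2pi (\<phi> * real j) - 1))
      \<le> (\<Sum>j<L. 2 * pi * \<eta> * real L)"
    by (intro order.trans[OF norm_sum] sum_mono) auto
  then show ?thesis
    unfolding e by (simp add: sum_distrib_left sum_subtractf[symmetric] algebra_simps power2_eq_square)
qed

lemma card_progression_starts_boundary_le:
  fixes w :: int
  assumes "0 \<le> w"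
  shows "real (card ({1 - w..int n} - {1..int n - w})) \<le> 2 * of_int w"
proof -
  have "{1 - w..int n} - {1..int n - w} = {1 - w..0} \<union> {int n - w + 1..int n}"
    using assms by auto
  then have "card ({1 - w..int n} - {1..int n - w}) \<le> 2 * nat w"
    using card_Un_le[of "{1 - w..0}" "{int n - w + 1..int n}"] by simp
  then show ?thesis
    using assms by linarith
qed

text \<open>Averaging over all translates of the progression \<open>0, q, \<dots>, (L - 1) q\<close>: when \<open>q\<theta>\<close> is within
  \<open>\<eta>\<close> of an integer, the phase is almost constant along each translate, so up to an error the Fourier
  coefficient is controlled by the absolute progression sums of \<open>g\<close> itself.\<close>
lemma norm_fourier_sum_le_progression_sums:
  fixes g :: "int \<Rightarrow> real" and n L :: nat and q h :: int
  defines "w \<equiv> q * (int L - 1)"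
  assumes g: "\<And>x. \<bar>g x\<bar> \<le> 1" and g0: "\<And>x. x \<notin> {1..int n} \<Longrightarrow> g x = 0"
    and L: "L \<ge> 1" and q: "q \<ge> 1" and qh: "\<bar>of_int q * \<theta> - of_int h\<bar> \<le> \<eta>"
  shows "real L * norm (fourier_sum n g \<theta>) \<le> 2 * of_int w * real L + real n * (2 * pi * \<eta> * real L ^ 2)
    + (\<Sum>x0\<in>{1..int n - w}. \<bar>\<Sum>j<L. g (x0 + q * int j)\<bar>)"
proof -
  define R where "R = {1 - w..int n}"
  define F where "F = {1..int n - w}"
  define G where "G x0 = (\<Sum>j<L. g (x0 + q * int j))" for x0
  define D where "D x0 = (\<Sum>j<L. of_real (g (x0 + q * int j)) * e2pi (\<theta> * of_int (x0 + q * int j)))" for x0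
  let ?E = "\<lambda>x0. e2pi (\<theta> * of_int x0) * of_real (G x0)"
  have w: "0 \<le> w"
    using q L by (simp add: w_def)
  have FR: "F \<subseteq> R"
    using w by (auto simp: R_def F_def)
  have card_F: "real (card F) \<le> real n"
    using w by (simp add: F_def)
  have "norm (D x0) \<le> real L" for x0
    unfolding D_def by (rule order.trans[OF sum_norm_le[of _ _ "\<lambda>_. 1"]]) (simp_all add: norm_mult g)
  then have "norm (\<Sum>x0\<in>R - F. D x0) \<le> (\<Sum>x0\<in>R - F. real L)"
    by (intro sum_norm_le)
  also have "\<dots> \<le> 2 * of_int w * real L"
    using card_progression_starts_boundary_le[OF w, of n] by (simp add: R_def F_def mult_right_mono)
  finally have boundary: "norm (\<Sum>x0\<in>R - F. D x0) \<le> 2 * of_int w * real L" .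
  have "norm (\<Sum>x0\<in>F. D x0 - ?E x0) \<le> (\<Sum>x0\<in>F. 2 * pi * \<eta> * real L ^ 2)"
    using norm_twisted_progression_sum_approx[OF g qh]
    by (intro order.trans[OF norm_sum] sum_mono) (simp add: D_def G_def)
  also have "\<dots> \<le> real n * (2 * pi * \<eta> * real L ^ 2)"
    using card_F order_trans[OF abs_ge_zero qh] by (simp add: mult_right_mono)
  finally have approx: "norm (\<Sum>x0\<in>F. D x0 - ?E x0) \<le> real n * (2 * pi * \<eta> * real L ^ 2)" .
  have phase_free: "norm (\<Sum>x0\<in>F. ?E x0) \<le> (\<Sum>x0\<in>F. \<bar>G x0\<bar>)"
    by (rule order.trans[OF norm_sum]) (simp add: norm_mult)
  have "of_nat L * fourier_sum n g \<theta> = (\<Sum>x0\<in>R. D x0)"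
    using sum_progression_translates[of n "\<lambda>x. of_real (g x) * e2pi (\<theta> * of_int x)" q L] g0 q
    by (simp add: R_def D_def w_def fourier_sum_def)
  also have "\<dots> = (\<Sum>x0\<in>R - F. D x0) + (\<Sum>x0\<in>F. D x0 - ?E x0) + (\<Sum>x0\<in>F. ?E x0)"
    using sum.subset_diff[OF FR, of D] by (simp add: R_def sum_subtractf)
  finally have "real L * norm (fourier_sum n g \<theta>)
      = norm ((\<Sum>x0\<in>R - F. D x0) + (\<Sum>x0\<in>F. D x0 - ?E x0) + (\<Sum>x0\<in>F. ?E x0))"
    by (metis norm_mult norm_of_nat)
  also have "\<dots> \<le> norm (\<Sum>x0\<in>R - F. D x0) + norm (\<Sum>x0\<in>F. D x0 - ?E x0) + norm (\<Sum>x0\<in>F. ?E x0)"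
    by (intro order.trans[OF norm_triangle_ineq] add_mono norm_triangle_ineq order_refl)
  finally show ?thesis
    using boundary approx phase_free by (simp add: F_def G_def)
qed

text \<open>The one-sided bound on progression sums, together with the zero mean, bounds the absolute
  progression sums; Dirichlet's theorem supplies the common difference \<open>q \<le> Q\<close>.\<close>
lemma norm_fourier_sum_le_of_progression_sums_le:
  fixes g :: "int \<Rightarrow> real" and n L Q :: nat and \<epsilon> \<theta> :: real
  assumes g: "\<And>x. \<bar>g x\<bar> \<le> 1" and g0: "\<And>x. x \<notin> {1..int n} \<Longrightarrow> g x = 0"
    and mean: "(\<Sum>x\<in>{1..int n}. g x) = 0" and L: "L \<ge> 1" and Q: "Q \<ge> 1" and \<epsilon>: "\<epsilon> \<ge> 0"
    and progression: "\<And>x0 q. 1 \<le> q \<Longrightarrow> q \<le> int Q \<Longrightarrow> 1 \<le> x0 \<Longrightarrow> x0 + q * (int L - 1) \<le> int n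
      \<Longrightarrow> (\<Sum>j<L. g (x0 + q * int j)) \<le> \<epsilon> * real L"
  shows "norm (fourier_sum n g \<theta>) \<le> 2 * \<epsilon> * real n + 4 * real Q * real L + 2 * pi * real n * real L / real Q"
proof -
  from Q have "Q > 0"
    by simp
  then obtain h q where q: "0 < q" "q \<le> int Q" and qh: "\<bar>of_int q * \<theta> - of_int h\<bar> < 1 / real Q"
    by (rule Dirichlet_approx)
  define w where "w = q * (int L - 1)"
  define R where "R = {1 - w..int n}"
  define F where "F = {1..int n - w}"
  define G where "G x0 = (\<Sum>j<L. g (x0 + q * int j))" for x0
  have "0 \<le> w" "w \<le> int Q * int L"
    using q L mult_mono[of q "int Q" "int L - 1" "int L"] by (auto simp: w_def)
  then have w: "0 \<le> w" "real_of_int w \<le> real Q * real L"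
    by (metis of_int_le_iff of_int_mult of_int_of_nat_eq)+
  have "(\<Sum>x0\<in>R. G x0) = 0"
    using sum_progression_translates[of n g q L] g0 q mean by (simp add: R_def G_def w_def)
  moreover have "G x0 \<le> \<epsilon> * real L" if "x0 \<in> F" for x0
    using that q by (auto simp: G_def F_def w_def intro!: progression)
  moreover have "\<bar>G x0\<bar> \<le> real L" for x0
  proof -
    have "\<bar>G x0\<bar> \<le> (\<Sum>j<L. 1)"
      unfolding G_def by (rule order.trans[OF sum_abs sum_mono]) (rule g)
    then show ?thesis
      by simp
  qed
  ultimately have "(\<Sum>x0\<in>F. \<bar>G x0\<bar>) \<le> 2 * real (card F) * (\<epsilon> * real L) + real (card (R - F)) * real L"
    using \<epsilon> w by (intro sum_abs_le_of_sum_eq_0) (auto simp: R_def F_def)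
  also have "\<dots> \<le> 2 * real n * (\<epsilon> * real L) + 2 * real Q * real L * real L"
    using card_progression_starts_boundary_le[OF w(1), of n] w \<epsilon>
    by (intro add_mono mult_right_mono mult_left_mono) (auto simp: R_def F_def)
  finally have "real L * norm (fourier_sum n g \<theta>)
      \<le> 2 * real Q * real L * real L + real n * (2 * pi * (1 / real Q) * real L ^ 2)
        + (2 * real n * (\<epsilon> * real L) + 2 * real Q * real L * real L)"
    using norm_fourier_sum_le_progression_sums[where g = g and n = n and L = L and q = q and h = h and
        \<theta> = \<theta> and \<eta> = "1 / real Q", OF g g0 L _ less_imp_le[OF qh], folded w_def] q
      mult_right_mono[OF w(2), of "real L"]
    by (simp add: F_def G_def algebra_simps)
  also have "\<dots> = real L * (2 * \<epsilon> * real n + 4 * real Q * real L + 2 * pi * real n * real L / real Q)"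
    by (simp add: algebra_simps power2_eq_square)
  finally show ?thesis
    using L by simp
qed

lemma num_3AP_eq_ap3_form:
  assumes "S \<subseteq> {1..int n}"
  shows "real (num_3AP S) = ap3_form n (indicator S) (indicator S) (indicator S)"
proof -
  let ?I = "{1..int n}"
  define X where "X = {(a, b, c). a \<in> S \<and> b \<in> S \<and> c \<in> S \<and> a + c = 2 * b}"
  have "X = (?I \<times> ?I \<times> ?I) \<inter> X"
    using assms by (auto simp: X_def)
  then have "real (num_3AP S) = (\<Sum>p\<in>?I \<times> ?I \<times> ?I. if p \<in> X then 1 else 0)"
    unfolding num_3AP_def X_def[symmetric] by (simp add: sum.If_cases)
  also have "\<dots> = (\<Sum>a\<in>?I. \<Sum>b\<in>?I. \<Sum>c\<in>?I. if (a, b, c) \<in> X then 1 else 0)"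
    by (simp add: sum.cartesian_product case_prod_beta)
  also have "\<dots> = ap3_form n (indicator S) (indicator S) (indicator S)"
    unfolding ap3_form_def by (intro sum.cong refl) (auto simp: X_def indicator_def)
  finally show ?thesis .
qed

definition parity_sign :: "int \<Rightarrow> real" where
  "parity_sign x = (if even x then 1 else -1)"

lemma sum_parity_sign: "(\<Sum>x\<in>{1..int n}. parity_sign x) = (if even n then 0 else -1)"
proof (induction n)
  case (Suc n)
  have "{1..int (Suc n)} = insert (int n + 1) {1..int n}"
    by auto
  then show ?case
    using Suc by (simp add: parity_sign_def)
qed simp

text \<open>Summing \<open>[a + c = 2b]\<close> over \<open>b\<close> leaves \<open>[a + c even] = (1 + \<sigma>(a) \<sigma>(c)) / 2\<close>, where \<open>\<sigma>\<close> is
  the parity sign.\<close>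
lemma ap3_form_const:
  "ap3_form n (\<lambda>_. d) (\<lambda>_. d) (\<lambda>_. d) = d ^ 3 * (real n ^ 2 + (if even n then 0 else 1)) / 2"
proof -
  let ?I = "{1..int n}"
  have "(\<Sum>b\<in>?I. if a + c = 2 * b then 1 else (0::real)) = (1 + parity_sign a * parity_sign c) / 2"
    if "a \<in> ?I" "c \<in> ?I" for a c
  proof -
    have "(\<Sum>b\<in>?I. if a + c = 2 * b then 1 else (0::real))
        = (\<Sum>b\<in>?I. if b = (a + c) div 2 then (if even (a + c) then 1 else 0) else 0)"
      by (intro sum.cong refl) (auto; presburger)
    also have "\<dots> = (if even (a + c) then 1 else 0)"
      using that by (subst sum.delta) auto
    finally show ?thesis
      by (auto simp: parity_sign_def)
  qed
  then have "(\<Sum>a\<in>?I. \<Sum>b\<in>?I. \<Sum>c\<in>?I. if a + c = 2 * b then 1 else (0::real))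
      = (\<Sum>a\<in>?I. \<Sum>c\<in>?I. (1 + parity_sign a * parity_sign c) / 2)"
    by (subst sum.swap) (intro sum.cong refl, simp)
  also have "\<dots> = (real n ^ 2 + (\<Sum>a\<in>?I. parity_sign a) ^ 2) / 2"
    by (simp add: sum_divide_distrib[symmetric] sum.distrib power2_eq_square sum_product)
  finally show ?thesis
    unfolding ap3_form_def sum_parity_sign
    by (simp add: sum_distrib_left[symmetric] power3_eq_cube mult_ac)
qed

lemma ap3_form_decompose:
  assumes "\<And>x. x \<in> {1..int n} \<Longrightarrow> f x = u x + g x"
  shows "ap3_form n f f f = ap3_form n u u u + ap3_form n g f f + ap3_form n u g f + ap3_form n u u g"
  unfolding ap3_form_def
  by (simp only: sum.distrib[symmetric]) (intro sum.cong refl, simp add: assms algebra_simps)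

text \<open>Writing \<open>1\<^sub>S = \<delta> + g\<close>, every term of the expansion of \<open>ap3_form\<close> except the constant one
  contains \<open>g\<close>; the constant term is \<open>\<delta>\<^sup>3 n\<^sup>2 / 2\<close> up to a parity correction of at most \<open>1/2\<close>.\<close>
lemma num_3AP_deviation_le_of_fourier_le:
  fixes Sn :: "int set" and g :: "int \<Rightarrow> real" and n :: nat
  defines "\<delta> \<equiv> real (card Sn) / real n"
  assumes Sn: "Sn \<subseteq> {1..int n}" and n: "n \<ge> 1" and M: "M \<ge> 0"
    and g: "\<And>x. x \<in> {1..int n} \<Longrightarrow> g x = indicator Sn x - \<delta>"
    and small: "\<And>\<theta>. norm (fourier_sum n g \<theta>) \<le> M"
  shows "\<bar>real (num_3AP Sn) - \<delta> ^ 3 / 2 * real n ^ 2\<bar> \<le> 3 * M * real n + 1 / 2"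
proof -
  let ?I = "{1..int n}"
  let ?f = "indicator Sn :: int \<Rightarrow> real" and ?u = "\<lambda>_::int. \<delta>"
  have "card Sn \<le> n"
    using card_mono[OF _ Sn] by simp
  then have \<delta>: "0 \<le> \<delta>" "\<delta> \<le> 1"
    using n by (auto simp: \<delta>_def)
  have f: "\<bar>?f x\<bar> \<le> 1" and u: "\<bar>?u x\<bar> \<le> 1" and g_le: "x \<in> ?I \<Longrightarrow> \<bar>g x\<bar> \<le> 1" for x
    using \<delta> g[of x] by (auto simp: indicator_def)
  have "\<bar>ap3_form n g ?f ?f\<bar> \<le> M * real n" "\<bar>ap3_form n ?u g ?f\<bar> \<le> M * real n"
    "\<bar>ap3_form n ?u ?u g\<bar> \<le> M * real n"
    using small by (intro ap3_form_le[OF _ _ _ M] f u g_le; simp)+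
  moreover have "real (num_3AP Sn) = ap3_form n ?u ?u ?u + ap3_form n g ?f ?f + ap3_form n ?u g ?f
      + ap3_form n ?u ?u g"
    unfolding num_3AP_eq_ap3_form[OF Sn] by (rule ap3_form_decompose) (simp add: g)
  moreover have "\<bar>ap3_form n ?u ?u ?u - \<delta> ^ 3 / 2 * real n ^ 2\<bar> \<le> 1 / 2"
    using \<delta> power_le_one[of \<delta> 3] by (simp add: ap3_form_const field_simps)
  ultimately show ?thesis
    by linarith
qed

text \<open>The positions along the progression that hit \<open>Sn\<close> form a subset of \<open>{1..L}\<close> whose affine
  image lies in \<open>Sn\<close>, so by (C1) and (C2) it has property \<open>P\<close>.\<close>
lemma card_progression_hits_le:
  fixes P :: "int set \<Rightarrow> bool" and Sn SL :: "int set" and q a :: int and L :: nat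
  assumes aff: "affine_prop P" and "finite Sn" "P Sn"
    and SL: "\<And>T. T \<subseteq> {1..int L} \<Longrightarrow> P T \<Longrightarrow> card T \<le> card SL"
    and q: "q \<noteq> 0"
  shows "card {j \<in> {..<L}. a + q * int j \<in> Sn} \<le> card SL"
proof -
  define B where "B = {j \<in> {1..int L}. a + q * (j - 1) \<in> Sn}"
  have "B = (\<lambda>j. int j + 1) ` {j \<in> {..<L}. a + q * int j \<in> Sn}"
  proof (rule set_eqI, rule iffI)
    fix j assume "j \<in> B"
    then have "nat (j - 1) \<in> {j \<in> {..<L}. a + q * int j \<in> Sn}" "j = int (nat (j - 1)) + 1"
      by (auto simp: B_def)
    then show "j \<in> (\<lambda>j. int j + 1) ` {j \<in> {..<L}. a + q * int j \<in> Sn}"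
      by blast
  qed (auto simp: B_def)
  then have card_B: "card B = card {j \<in> {..<L}. a + q * int j \<in> Sn}"
    by (simp add: card_image inj_on_def)
  have "B \<subseteq> {1..int L}"
    by (auto simp: B_def)
  then have "finite B"
    by (rule finite_subset) simp
  moreover have "(\<lambda>j. q * j + (a - q)) ` B \<subseteq> Sn"
    by (auto simp: B_def algebra_simps)
  then have "P ((\<lambda>j. q * j + (a - q)) ` B)"
    using aff assms(2,3) unfolding affine_prop_def by blast
  ultimately have "P B"
    using aff q unfolding affine_prop_def by blast
  then show ?thesis
    using SL[OF \<open>B \<subseteq> {1..int L}\<close>] card_B by simp
qed

lemma progression_sum_balanced_le:
  fixes P :: "int set \<Rightarrow> bool" and Sn SL :: "int set" and q a :: int and L :: nat
  assumes aff: "affine_prop P" and "finite Sn" "P Sn"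
    and SL: "\<And>T. T \<subseteq> {1..int L} \<Longrightarrow> P T \<Longrightarrow> card T \<le> card SL"
    and SL_le: "real (card SL) \<le> (c + \<epsilon>) * real L" and "c \<le> \<delta>" and "q \<noteq> 0"
  shows "(\<Sum>j<L. indicator Sn (a + q * int j) - \<delta>) \<le> \<epsilon> * real L"
proof -
  have "(\<Sum>j<L. indicator Sn (a + q * int j) :: real) = real (card {j \<in> {..<L}. a + q * int j \<in> Sn})"
    by (simp add: indicator_def sum.If_cases Int_def)
  also have "\<dots> \<le> (c + \<epsilon>) * real L"
    using card_progression_hits_le[where L = L and q = q and a = a, OF assms(1-4,7)] SL_le by simp
  finally show ?thesis
    using assms(6) mult_right_mono[of c \<delta> "real L"] by (simp add: sum_subtractf algebra_simps)
qed

lemma num_3AP_deviation_le: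
  fixes P :: "int set \<Rightarrow> bool" and Sn SL :: "int set" and n L Q :: nat and \<epsilon> c :: real
  assumes aff: "affine_prop P" and Sn: "Sn \<subseteq> {1..int n}" "P Sn" and n: "n \<ge> 1"
    and SL: "\<And>T. T \<subseteq> {1..int L} \<Longrightarrow> P T \<Longrightarrow> card T \<le> card SL"
    and SL_le: "real (card SL) \<le> (c + \<epsilon>) * real L" and c: "c \<le> real (card Sn) / real n"
    and L: "L \<ge> 1" and Q: "Q \<ge> 1" and \<epsilon>: "\<epsilon> \<ge> 0"
  shows "\<bar>real (num_3AP Sn) - (real (card Sn) / real n) ^ 3 / 2 * real n ^ 2\<bar>
    \<le> 3 * (2 * \<epsilon> * real n + 4 * real Q * real L + 2 * pi * real n * real L / real Q) * real n + 1 / 2"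
proof -
  let ?I = "{1..int n}"
  define \<delta> where "\<delta> = real (card Sn) / real n"
  define g where "g x = (if x \<in> ?I then indicator Sn x - \<delta> else 0)" for x
  have fin: "finite Sn"
    using Sn(1) finite_subset by blast
  have "card Sn \<le> n"
    using card_mono[OF _ Sn(1)] by simp
  then have \<delta>: "0 \<le> \<delta>" "\<delta> \<le> 1"
    using n by (auto simp: \<delta>_def)
  have g_le: "\<bar>g x\<bar> \<le> 1" for x
    using \<delta> by (simp add: g_def indicator_def)
  have "(\<Sum>x\<in>?I. indicator Sn x :: real) = real (card Sn)"
    using Sn(1) by (simp add: indicator_def sum.If_cases Int_absorb1)
  then have mean: "(\<Sum>x\<in>?I. g x) = 0"
    using n by (simp add: g_def sum_subtractf \<delta>_def)
  have progression: "(\<Sum>j<L. g (x0 + q * int j)) \<le> \<epsilon> * real L"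
    if q: "1 \<le> q" and x0: "1 \<le> x0" "x0 + q * (int L - 1) \<le> int n" for x0 q
  proof -
    have "x0 + q * int j \<in> ?I" if "j < L" for j
    proof -
      have "0 \<le> q * int j" "q * int j \<le> q * (int L - 1)"
        using q that by (auto intro: mult_left_mono)
      then show ?thesis
        using x0 by auto
    qed
    then have "(\<Sum>j<L. g (x0 + q * int j)) = (\<Sum>j<L. indicator Sn (x0 + q * int j) - \<delta>)"
      by (simp add: g_def)
    also have "\<dots> \<le> \<epsilon> * real L"
      using q c by (intro progression_sum_balanced_le[OF aff fin Sn(2) SL SL_le]) (auto simp: \<delta>_def)
    finally show ?thesis .
  qed
  have "norm (fourier_sum n g \<theta>) \<le> 2 * \<epsilon> * real n + 4 * real Q * real L + 2 * pi * real n * real L / real Q"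
    for \<theta>
    using g_le mean L Q \<epsilon> progression by (intro norm_fourier_sum_le_of_progression_sums_le) (auto simp: g_def)
  then show ?thesis
    using \<epsilon> by (intro num_3AP_deviation_le_of_fourier_le[OF Sn(1) n, where g = g]) (auto simp: g_def \<delta>_def)
qed

lemma num_3AP_deviation_eventually_le:
  fixes P :: "int set \<Rightarrow> bool" and S :: "nat \<Rightarrow> int set" and L :: nat and \<epsilon> c :: real
  assumes aff: "affine_prop P"
    and S_sub: "\<And>n. n \<ge> 1 \<Longrightarrow> S n \<subseteq> {1..int n}"
    and S_P: "\<And>n. n \<ge> 1 \<Longrightarrow> P (S n)"
    and S_max: "\<And>n T. n \<ge> 1 \<Longrightarrow> T \<subseteq> {1..int n} \<Longrightarrow> P T \<Longrightarrow> card T \<le> card (S n)"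
    and c: "\<And>n. n \<ge> 1 \<Longrightarrow> c \<le> real (card (S n)) / real n"
    and L: "L \<ge> 1" and SL: "real (card (S L)) \<le> (c + \<epsilon>) * real L" and \<epsilon>: "\<epsilon> > 0"
  shows "\<forall>\<^sub>F n in sequentially.
    \<bar>real (num_3AP (S n)) - (real (card (S n)) / real n) ^ 3 / 2 * real n ^ 2\<bar> \<le> 13 * \<epsilon> * real n ^ 2"
proof -
  define Q where "Q = nat \<lceil>2 * pi * real L / \<epsilon>\<rceil> + 1"
  have Q: "Q \<ge> 1"
    by (simp add: Q_def)
  have "2 * pi * real L / \<epsilon> \<le> real Q"
    unfolding Q_def by linarith
  then have Q_large: "2 * pi * real L / real Q \<le> \<epsilon>"
    using \<epsilon> Q by (simp add: field_simps)
  show ?thesis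
  proof (rule eventually_sequentiallyI)
    fix n assume n: "nat \<lceil>4 * real Q * real L / \<epsilon>\<rceil> + nat \<lceil>1 / \<epsilon>\<rceil> + 1 \<le> n"
    then have n1: "n \<ge> 1" and "4 * real Q * real L / \<epsilon> \<le> real n" "1 / \<epsilon> \<le> real n"
      by linarith+
    then have "4 * real Q * real L \<le> \<epsilon> * real n" and n_large: "1 \<le> \<epsilon> * real n"
      using \<epsilon> by (simp_all add: field_simps)
    moreover have "2 * pi * real n * real L / real Q \<le> \<epsilon> * real n"
      using mult_left_mono[OF Q_large, of "real n"] by (simp add: mult_ac)
    ultimately have "3 * (2 * \<epsilon> * real n + 4 * real Q * real L + 2 * pi * real n * real L / real Q) * real n
        \<le> 3 * (4 * \<epsilon> * real n) * real n"
      by (intro mult_right_mono) auto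
    moreover have "1 \<le> \<epsilon> * real n * real n"
      using n_large n1 mult_mono[of 1 "\<epsilon> * real n" 1 "real n"] by simp
    moreover have "\<bar>real (num_3AP (S n)) - (real (card (S n)) / real n) ^ 3 / 2 * real n ^ 2\<bar>
      \<le> 3 * (2 * \<epsilon> * real n + 4 * real Q * real L + 2 * pi * real n * real L / real Q) * real n + 1 / 2"
      using \<epsilon> by (intro num_3AP_deviation_le[OF aff S_sub[OF n1] S_P[OF n1] n1 S_max[OF L] SL c[OF n1] L Q])
        auto
    ultimately show "\<bar>real (num_3AP (S n)) - (real (card (S n)) / real n) ^ 3 / 2 * real n ^ 2\<bar>
        \<le> 13 * \<epsilon> * real n ^ 2"
      by (simp add: power2_eq_square)
  qed
qed

theorem mainTheorem3:
  fixes P :: "int set \<Rightarrow> bool" and S :: "nat \<Rightarrow> int set"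
  assumes "affine_prop P"
    and S_sub: "\<And>n. n \<ge> 1 \<Longrightarrow> S n \<subseteq> {1..int n}"
    and S_P: "\<And>n. n \<ge> 1 \<Longrightarrow> P (S n)"
    and S_max: "\<And>n T. n \<ge> 1 \<Longrightarrow> T \<subseteq> {1..int n} \<Longrightarrow> P T \<Longrightarrow> card T \<le> card (S n)"
  shows "(\<lambda>n. real (num_3AP (S n)) - (real (card (S n)) / real n) ^ 3 / 2 * real n ^ 2)
           \<in> o(\<lambda>n. real n ^ 2)"
proof (rule landau_o.smallI)
  fix \<epsilon> :: real assume \<epsilon>: "\<epsilon> > 0"
  define density where "density m = real (card (S m)) / real m" for m
  define c where "c = (INF m\<in>{1..}. density m)"
  have bdd: "bdd_below (density ` {1..})"
    by (intro bdd_belowI[of _ 0]) (auto simp: density_def)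
  have c_le: "c \<le> density n" if "n \<ge> 1" for n
    unfolding c_def using bdd that by (intro cINF_lower) auto
  obtain L where L: "L \<ge> 1" and "density L < c + \<epsilon> / 13"
    using cINF_less_iff[OF _ bdd, of "c + \<epsilon> / 13"] \<epsilon> by (auto simp: c_def)
  then have "real (card (S L)) \<le> (c + \<epsilon> / 13) * real L"
    by (simp add: density_def field_simps)
  with \<epsilon> have "\<forall>\<^sub>F n in sequentially.
    \<bar>real (num_3AP (S n)) - (real (card (S n)) / real n) ^ 3 / 2 * real n ^ 2\<bar> \<le> 13 * (\<epsilon> / 13) * real n ^ 2"
    using c_le L by (intro num_3AP_deviation_eventually_le[OF assms]) (auto simp: density_def)
  then show "\<forall>\<^sub>F n in sequentially.
    norm (real (num_3AP (S n)) - (real (card (S n)) / real n) ^ 3 / 2 * real n ^ 2) \<le> \<epsilon> * norm (real n ^ 2)"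
    by (rule eventually_mono) simp
qed

end
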